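(* Let $n\ge0$ and let $\mathcal V$ be a variety with $n+2$ Gumm terms. For every integer $q\ge1$, with $k=(2^{q+1}-2)n$, $\mathcal V$ satisfies $$\alpha(\beta\circ_{2^q+1}\gamma)\subseteq\alpha(\gamma\circ\beta)\circ(\alpha\gamma\circ_k\alpha\beta)\quad\text{and}\quad\alpha(\beta\circ_{2^q+1}\gamma)\subseteq(\alpha\beta\circ_k\alpha\gamma)\circ\alpha(\beta\circ\gamma).$$
   Context: Here $\alpha,\beta,\gamma$ range over congruences of algebras in $\mathcal V$. $\circ$ is relational composition, juxtaposition is intersection. For relations $X,Y$ and $m\ge1$, $X\circ_m Y$ denotes $X\circ Y\circ X\circ\cdots$ with $m$ factors; $X\circ_0Y$ is the identity relation. A variety has $n+2$ Gumm terms if it has ternary terms $p,j_1,\dots,j_{n+1}$ satisfying: $x=j_i(x,y,x)$ for all $i$; $x=p(x,z,z)$; $p(x,x,z)=j_1(x,x,z)$; $j_i(x,z,z)=j_{i+1}(x,z,z)$ for odd $i\le n$; $j_i(x,x,z)=j_{i+1}(x,x,z)$ for even $i\le n$; $j_{n+1}(x,y,z)=z$. *)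

theory Defs
  imports Main
begin

datatype 'f trm = Var nat | Fn 'f "'f trm list"

fun eval :: "('f \<Rightarrow> 'a list \<Rightarrow> 'a) \<Rightarrow> (nat \<Rightarrow> 'a) \<Rightarrow> 'f trm \<Rightarrow> 'a" where
  "eval I \<rho> (Var i) = \<rho> i"
| "eval I \<rho> (Fn f ts) = I f (map (eval I \<rho>) ts)"

fun wf_trm :: "('f \<Rightarrow> nat) \<Rightarrow> nat \<Rightarrow> 'f trm \<Rightarrow> bool" where
  "wf_trm ar k (Var i) = (i < k)"
| "wf_trm ar k (Fn f ts) = (length ts = ar f \<and> (\<forall>t\<in>set ts. wf_trm ar k t))"

definition eval3 :: "('f \<Rightarrow> 'a list \<Rightarrow> 'a) \<Rightarrow> 'f trm \<Rightarrow> 'a \<Rightarrow> 'a \<Rightarrow> 'a \<Rightarrow> 'a" where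
  "eval3 I t x y z = eval I (\<lambda>i. if i = 0 then x else if i = 1 then y else z) t"

definition algebra :: "('f \<Rightarrow> nat) \<Rightarrow> 'a set \<Rightarrow> ('f \<Rightarrow> 'a list \<Rightarrow> 'a) \<Rightarrow> bool" where
  "algebra ar A I \<longleftrightarrow> (\<forall>f xs. length xs = ar f \<longrightarrow> set xs \<subseteq> A \<longrightarrow> I f xs \<in> A)"

definition congruence :: "('f \<Rightarrow> nat) \<Rightarrow> 'a set \<Rightarrow> ('f \<Rightarrow> 'a list \<Rightarrow> 'a) \<Rightarrow> 'a rel \<Rightarrow> bool" where
  "congruence ar A I \<theta> \<longleftrightarrow>
     \<theta> \<subseteq> A \<times> A \<and> refl_on A \<theta> \<and> sym \<theta> \<and> trans \<theta> \<and>
     (\<forall>f xs ys. length xs = ar f \<longrightarrow> length ys = ar f \<longrightarrow>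
        (\<forall>i < ar f. (xs ! i, ys ! i) \<in> \<theta>) \<longrightarrow> (I f xs, I f ys) \<in> \<theta>)"

text \<open>X \<circ>_m Y = X \<circ> Y \<circ> X \<circ> ... with m factors; m = 0 gives the identity relation.\<close>
fun alt_comp :: "'a rel \<Rightarrow> 'a rel \<Rightarrow> nat \<Rightarrow> 'a rel" where
  "alt_comp X Y 0 = Id"
| "alt_comp X Y (Suc m) = X O alt_comp Y X m"

definition gumm_terms ::
  "('f \<Rightarrow> nat) \<Rightarrow> 'a set \<Rightarrow> ('f \<Rightarrow> 'a list \<Rightarrow> 'a) \<Rightarrow> nat \<Rightarrow> 'f trm \<Rightarrow> (nat \<Rightarrow> 'f trm) \<Rightarrow> bool" where
  "gumm_terms ar A I n p j \<longleftrightarrow>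
     wf_trm ar 3 p \<and> (\<forall>i\<in>{1..n+1}. wf_trm ar 3 (j i)) \<and>
     (\<forall>x\<in>A. \<forall>y\<in>A. \<forall>z\<in>A.
        (\<forall>i\<in>{1..n+1}. eval3 I (j i) x y x = x) \<and>
        eval3 I p x z z = x \<and>
        eval3 I p x x z = eval3 I (j 1) x x z \<and>
        (\<forall>i\<in>{1..n}. odd i \<longrightarrow> eval3 I (j i) x z z = eval3 I (j (i+1)) x z z) \<and>
        (\<forall>i\<in>{1..n}. even i \<longrightarrow> eval3 I (j i) x x z = eval3 I (j (i+1)) x x z) \<and>
        eval3 I (j (n+1)) x y z = z)"

end

theory Submission
  imports Defs
begin

text \<open>Take a chain \<open>a = x\<^sub>0 \<beta> x\<^sub>1 \<gamma> x\<^sub>2 \<beta> \<dots> \<beta> x\<^sub>m = d\<close> with \<open>m = 2N + 1\<close>, \<open>N = 2\<^sup>q\<^sup>-\<^sup>1\<close>,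
  and \<open>(a, d) \<in> \<alpha>\<close>. Folding it at its midpoint with the Gumm term \<open>p\<close> yields a chain of length
  \<open>N + 1\<close> from \<open>a\<close> to \<open>p(a, a, d) = j\<^sub>1(a, a, d)\<close>, which is \<open>\<alpha>\<close>-related to \<open>a\<close>; so induction on \<open>q\<close>
  applies to it, with base case \<open>a \<gamma> p(a, x\<^sub>1, x\<^sub>2) \<beta> p(a, a, d)\<close>. From \<open>j\<^sub>1(a, a, d) \<alpha>\<beta> j\<^sub>1(a, x\<^sub>1, d)\<close>
  one reaches \<open>j\<^sub>n\<^sub>+\<^sub>1(a, x\<^sub>1, d) = d\<close> by sweeping each polynomial \<open>j\<^sub>s(a, -, d)\<close>, whose values all lie
  in the \<open>\<alpha>\<close>-class of \<open>a\<close>, over the inner segment \<open>x\<^sub>1, \<dots>, x\<^sub>m\<^sub>-\<^sub>1\<close>, alternately forwards and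
  backwards; the Gumm identities glue consecutive sweeps at \<open>x\<^sub>m = d\<close> resp. \<open>x\<^sub>0 = a\<close>, and each
  sweep costs \<open>2N\<close> steps. The second inclusion is the converse of the first.\<close>

lemma alt_comp_Suc_right:
  "alt_comp X Y (Suc m) = alt_comp X Y m O (if even m then X else Y)"
proof (induction m arbitrary: X Y)
  case 0
  then show ?case by simp
next
  case (Suc m)
  have "alt_comp X Y (Suc (Suc m)) = X O alt_comp Y X (Suc m)"
    by simp
  also have "\<dots> = X O alt_comp Y X m O (if even m then Y else X)"
    by (simp only: Suc.IH)
  finally show ?case
    by (simp add: O_assoc)
qed

lemma alt_comp_add:
  "alt_comp X Y (k + l) = alt_comp X Y k O (if even k then alt_comp X Y l else alt_comp Y X l)"
  by (induction k arbitrary: X Y) (auto simp: O_assoc)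

lemma alt_comp_add_even:
  "even k \<Longrightarrow> alt_comp X Y (k + l) = alt_comp X Y k O alt_comp X Y l"
  by (simp add: alt_comp_add)

lemma converse_alt_comp:
  "(alt_comp X Y m)\<inverse> =
     (if even m then alt_comp (Y\<inverse>) (X\<inverse>) m else alt_comp (X\<inverse>) (Y\<inverse>) m)"
proof (induction m arbitrary: X Y)
  case 0
  then show ?case by simp
next
  case (Suc m)
  have "(alt_comp X Y (Suc m))\<inverse> = (alt_comp Y X m)\<inverse> O X\<inverse>"
    by (simp add: converse_relcomp)
  also have "\<dots> = (if even m then alt_comp (X\<inverse>) (Y\<inverse>) m else alt_comp (Y\<inverse>) (X\<inverse>) m) O X\<inverse>"
    using Suc.IH by simp
  also have "\<dots> = (if even (Suc m) then alt_comp (Y\<inverse>) (X\<inverse>) (Suc m) else alt_comp (X\<inverse>) (Y\<inverse>) (Suc m))"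
    by (simp only: alt_comp_Suc_right) simp
  finally show ?case .
qed

lemma converse_alt_comp_sym:
  assumes "sym X" "sym Y"
  shows "(alt_comp X Y m)\<inverse> = (if even m then alt_comp Y X m else alt_comp X Y m)"
  using converse_alt_comp[of X Y m] assms by (simp add: sym_conv_converse_eq)

lemma alt_comp_map2:
  assumes "\<And>u u' w w'. (u, u') \<in> X \<Longrightarrow> (w, w') \<in> X \<Longrightarrow> (g u w, g u' w') \<in> X'"
    and "\<And>u u' w w'. (u, u') \<in> Y \<Longrightarrow> (w, w') \<in> Y \<Longrightarrow> (g u w, g u' w') \<in> Y'"
    and "(u, u') \<in> alt_comp X Y m" "(w, w') \<in> alt_comp X Y m"
  shows "(g u w, g u' w') \<in> alt_comp X' Y' m"
  using assms
proof (induction m arbitrary: X Y X' Y' u w)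
  case 0
  then show ?case by simp
next
  case (Suc m)
  from Suc.prems(3,4) obtain u1 w1 where
    "(u, u1) \<in> X" "(u1, u') \<in> alt_comp Y X m" "(w, w1) \<in> X" "(w1, w') \<in> alt_comp Y X m"
    by auto
  then have "(g u w, g u1 w1) \<in> X'" "(g u1 w1, g u' w') \<in> alt_comp Y' X' m"
    using Suc.prems(1,2) Suc.IH[of Y Y' X X' u1 w1] by blast+
  then show ?case
    by auto
qed

lemma alt_comp_map:
  assumes "\<And>x y. (x, y) \<in> X \<Longrightarrow> (f x, f y) \<in> X'" "\<And>x y. (x, y) \<in> Y \<Longrightarrow> (f x, f y) \<in> Y'"
    and "(x, y) \<in> alt_comp X Y m"
  shows "(f x, f y) \<in> alt_comp X' Y' m"
  using alt_comp_map2[where g = "\<lambda>u w. f u", OF _ _ assms(3) assms(3)] assms(1,2) by blast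

lemma alt_comp_absorb:
  assumes "even k" "trans Y" "R O Y \<subseteq> R"
  shows "R O alt_comp X Y k O Y \<subseteq> R O alt_comp X Y k"
proof (cases k)
  case 0
  then show ?thesis using assms(3) by simp
next
  case (Suc k')
  then have "alt_comp X Y k = alt_comp X Y k' O Y"
    using assms(1) alt_comp_Suc_right[of X Y k'] by simp
  moreover have "Y O Y \<subseteq> Y"
    using assms(2) by (auto elim: transE)
  ultimately show ?thesis
    by (auto simp: O_assoc) (meson relcomp.simps subsetD)
qed

lemma congruence_refl: "congruence ar A I \<theta> \<Longrightarrow> x \<in> A \<Longrightarrow> (x, x) \<in> \<theta>"
  unfolding congruence_def refl_on_def by blast

lemma congruence_sym: "congruence ar A I \<theta> \<Longrightarrow> sym \<theta>"
  unfolding congruence_def by blast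

lemma congruence_trans: "congruence ar A I \<theta> \<Longrightarrow> trans \<theta>"
  unfolding congruence_def by blast

lemma congruence_carrier: "congruence ar A I \<theta> \<Longrightarrow> (x, y) \<in> \<theta> \<Longrightarrow> x \<in> A \<and> y \<in> A"
  unfolding congruence_def by blast

lemma eval_congruence:
  assumes "congruence ar A I \<theta>" "wf_trm ar k t" "\<And>i. i < k \<Longrightarrow> (\<rho> i, \<rho>' i) \<in> \<theta>"
  shows "(eval I \<rho> t, eval I \<rho>' t) \<in> \<theta>"
  using assms(2)
proof (induction t)
  case (Var i)
  then show ?case using assms(3) by simp
next
  case (Fn f ts)
  have "\<forall>i < ar f. (map (eval I \<rho>) ts ! i, map (eval I \<rho>') ts ! i) \<in> \<theta>"
    using Fn by (auto simp: nth_mem)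
  with assms(1) Fn.prems show ?case
    unfolding congruence_def by simp
qed

lemma eval3_congruence:
  assumes "congruence ar A I \<theta>" "wf_trm ar 3 t"
    and "(x, x') \<in> \<theta>" "(y, y') \<in> \<theta>" "(z, z') \<in> \<theta>"
  shows "(eval3 I t x y z, eval3 I t x' y' z') \<in> \<theta>"
  unfolding eval3_def
proof (rule eval_congruence[OF assms(1,2)])
  fix i :: nat
  assume "i < 3"
  then show "((if i = 0 then x else if i = 1 then y else z),
              (if i = 0 then x' else if i = 1 then y' else z')) \<in> \<theta>"
    using assms(3-5) by auto
qed

locale gumm =
  fixes ar :: "'f \<Rightarrow> nat" and A :: "'a set" and I :: "'f \<Rightarrow> 'a list \<Rightarrow> 'a"
    and n :: nat and p :: "'f trm" and j :: "nat \<Rightarrow> 'f trm"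
  assumes gumm_terms: "gumm_terms ar A I n p j"
begin

lemma wf_p: "wf_trm ar 3 p"
  using gumm_terms unfolding gumm_terms_def by blast

lemma wf_j: "s \<in> {1..n+1} \<Longrightarrow> wf_trm ar 3 (j s)"
  using gumm_terms unfolding gumm_terms_def by blast

lemma j_xyx: "x \<in> A \<Longrightarrow> y \<in> A \<Longrightarrow> s \<in> {1..n+1} \<Longrightarrow> eval3 I (j s) x y x = x"
  using gumm_terms unfolding gumm_terms_def by blast

lemma p_xzz: "x \<in> A \<Longrightarrow> z \<in> A \<Longrightarrow> eval3 I p x z z = x"
  using gumm_terms unfolding gumm_terms_def by blast

lemma p_xxz: "x \<in> A \<Longrightarrow> z \<in> A \<Longrightarrow> eval3 I p x x z = eval3 I (j 1) x x z"
  using gumm_terms unfolding gumm_terms_def by blast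

lemma j_xzz_odd:
  "x \<in> A \<Longrightarrow> z \<in> A \<Longrightarrow> s \<in> {1..n} \<Longrightarrow> odd s \<Longrightarrow> eval3 I (j s) x z z = eval3 I (j (Suc s)) x z z"
  using gumm_terms unfolding gumm_terms_def by auto

lemma j_xxz_even:
  "x \<in> A \<Longrightarrow> z \<in> A \<Longrightarrow> s \<in> {1..n} \<Longrightarrow> even s \<Longrightarrow> eval3 I (j s) x x z = eval3 I (j (Suc s)) x x z"
  using gumm_terms unfolding gumm_terms_def by auto

lemma j_last: "x \<in> A \<Longrightarrow> y \<in> A \<Longrightarrow> z \<in> A \<Longrightarrow> eval3 I (j (n+1)) x y z = z"
  using gumm_terms unfolding gumm_terms_def by blast

lemma p_xxz_congruence:
  assumes "congruence ar A I \<theta>" "(x, z) \<in> \<theta>"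
  shows "(x, eval3 I p x x z) \<in> \<theta>"
proof -
  have "x \<in> A" "z \<in> A"
    using congruence_carrier[OF assms] by auto
  then have "eval3 I p x x x = x"
    using p_xzz by blast
  moreover have "(eval3 I p x x x, eval3 I p x x z) \<in> \<theta>"
    using assms \<open>x \<in> A\<close> by (blast intro: eval3_congruence wf_p congruence_refl)
  ultimately show ?thesis by simp
qed

text \<open>Folding a chain of length \<open>2N+1\<close> at its midpoint: the \<open>t\<close>-th step from the middle
  pairs \<open>x\<^sub>N\<^sub>+\<^sub>1\<^sub>-\<^sub>t\<close> with \<open>x\<^sub>N\<^sub>+\<^sub>t\<close>, and \<open>p(a, x\<^sub>N\<^sub>+\<^sub>1\<^sub>-\<^sub>t, x\<^sub>N\<^sub>+\<^sub>t)\<close> runs from \<open>p(a, x\<^sub>N, x\<^sub>N) = a\<close>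
  to \<open>p(a, a, d)\<close> in \<open>N + 1\<close> steps.\<close>
lemma p_fold:
  assumes cX: "congruence ar A I X" and cY: "congruence ar A I Y"
    and "a \<in> A" and "(a, d) \<in> alt_comp X Y (2 * N + 1)"
  shows "(a, eval3 I p a a d) \<in> (if even N then alt_comp X Y (Suc N) else alt_comp Y X (Suc N))"
proof -
  define Z where "Z = (if even N then X else Y)"
  define W where "W = (if even N then Y else X)"
  have cZ: "congruence ar A I Z" and cW: "congruence ar A I W"
    using cX cY by (simp_all add: Z_def W_def)
  have "alt_comp X Y (2 * N + 1) = alt_comp X Y N O Z O alt_comp W Z N"
    using alt_comp_add[of X Y N "Suc N"] by (cases "even N") (simp_all add: Z_def W_def mult_2)
  then obtain c e where ac: "(a, c) \<in> alt_comp X Y N" and ce: "(c, e) \<in> Z"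
    and ed: "(e, d) \<in> alt_comp W Z N"
    using assms(4) by auto
  have ca: "(c, a) \<in> alt_comp W Z N"
    using ac converse_alt_comp_sym[OF congruence_sym[OF cX] congruence_sym[OF cY], of N]
    by (auto simp: Z_def W_def)
  have "c \<in> A"
    using congruence_carrier[OF cZ ce] by simp
  have p_step: "(eval3 I p a u w, eval3 I p a u' w') \<in> \<theta>"
    if "congruence ar A I \<theta>" "(u, u') \<in> \<theta>" "(w, w') \<in> \<theta>" for \<theta> u u' w w'
    using that \<open>a \<in> A\<close> by (blast intro: eval3_congruence wf_p congruence_refl)
  have "(eval3 I p a c e, eval3 I p a a d) \<in> alt_comp W Z N"
    by (rule alt_comp_map2[OF _ _ ca ed]) (use p_step cW cZ in blast)+
  moreover have "(a, eval3 I p a c e) \<in> Z"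
    using p_step[OF cZ congruence_refl[OF cZ \<open>c \<in> A\<close>] ce] p_xzz[OF \<open>a \<in> A\<close> \<open>c \<in> A\<close>] by simp
  ultimately show ?thesis
    by (auto simp: Z_def W_def)
qed

end

locale gumm_congruences = gumm +
  fixes \<alpha> \<beta> \<gamma> :: "'a rel"
  assumes cong_\<alpha>: "congruence ar A I \<alpha>"
    and cong_\<beta>: "congruence ar A I \<beta>"
    and cong_\<gamma>: "congruence ar A I \<gamma>"
begin

lemma j_\<alpha>_class:
  assumes "s \<in> {1..n+1}" "(a, d) \<in> \<alpha>" "y \<in> A"
  shows "(eval3 I (j s) a y d, a) \<in> \<alpha>"
proof -
  have "a \<in> A"
    using congruence_carrier[OF cong_\<alpha> assms(2)] by simp
  have "(eval3 I (j s) a y d, eval3 I (j s) a y a) \<in> \<alpha>"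
    using assms \<open>a \<in> A\<close> cong_\<alpha> congruence_sym[OF cong_\<alpha>]
    by (blast intro: eval3_congruence wf_j congruence_refl dest: symD)
  then show ?thesis
    using j_xyx[OF \<open>a \<in> A\<close> assms(3,1)] by simp
qed

lemma j_congruence_Int_\<alpha>:
  assumes "congruence ar A I \<theta>" "s \<in> {1..n+1}" "(a, d) \<in> \<alpha>" "(y, y') \<in> \<theta>"
  shows "(eval3 I (j s) a y d, eval3 I (j s) a y' d) \<in> \<alpha> \<inter> \<theta>"
proof -
  have "a \<in> A" "d \<in> A" "y \<in> A" "y' \<in> A"
    using congruence_carrier[OF cong_\<alpha> assms(3)] congruence_carrier[OF assms(1,4)] by auto
  then have "(eval3 I (j s) a y d, eval3 I (j s) a y' d) \<in> \<theta>"
    using assms(1,2,4) by (blast intro: eval3_congruence wf_j congruence_refl)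
  moreover have "(eval3 I (j s) a y d, eval3 I (j s) a y' d) \<in> \<alpha>"
    using j_\<alpha>_class[OF assms(2,3) \<open>y \<in> A\<close>] j_\<alpha>_class[OF assms(2,3) \<open>y' \<in> A\<close>]
      congruence_sym[OF cong_\<alpha>] congruence_trans[OF cong_\<alpha>]
    by (blast dest: symD transD)
  ultimately show ?thesis by blast
qed

lemma j_shift:
  assumes "s \<in> {1..n}" "(a, d) \<in> \<alpha>" "odd K"
    and "(u, w) \<in> alt_comp \<gamma> \<beta> K" "(w, e) \<in> \<beta>"
    and "eval3 I (j s) a e d = eval3 I (j (Suc s)) a e d"
  shows "(eval3 I (j s) a u d, eval3 I (j (Suc s)) a w d) \<in> alt_comp (\<alpha> \<inter> \<gamma>) (\<alpha> \<inter> \<beta>) (Suc K)"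
proof -
  have s: "s \<in> {1..n+1}" "Suc s \<in> {1..n+1}"
    using assms(1) by auto
  have "(eval3 I (j s) a u d, eval3 I (j s) a w d) \<in> alt_comp (\<alpha> \<inter> \<gamma>) (\<alpha> \<inter> \<beta>) K"
    by (rule alt_comp_map[OF _ _ assms(4)])
      (use j_congruence_Int_\<alpha>[OF cong_\<gamma> s(1) assms(2)] j_congruence_Int_\<alpha>[OF cong_\<beta> s(1) assms(2)] in blast)+
  moreover have "(eval3 I (j s) a w d, eval3 I (j (Suc s)) a w d) \<in> \<alpha> \<inter> \<beta>"
  proof -
    have "(eval3 I (j s) a w d, eval3 I (j s) a e d) \<in> \<alpha> \<inter> \<beta>"
      "(eval3 I (j (Suc s)) a w d, eval3 I (j (Suc s)) a e d) \<in> \<alpha> \<inter> \<beta>"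
      using j_congruence_Int_\<alpha>[OF cong_\<beta> s(1) assms(2,5)] j_congruence_Int_\<alpha>[OF cong_\<beta> s(2) assms(2,5)] by auto
    then show ?thesis
      using assms(6) congruence_sym[OF cong_\<alpha>] congruence_sym[OF cong_\<beta>]
        congruence_trans[OF cong_\<alpha>] congruence_trans[OF cong_\<beta>]
      by (metis IntD1 IntD2 IntI symD transD)
  qed
  ultimately show ?thesis
    using assms(3) alt_comp_Suc_right[of "\<alpha> \<inter> \<gamma>" "\<alpha> \<inter> \<beta>" K] by auto
qed

lemma j_sweep:
  assumes "(a, d) \<in> \<alpha>" "(a, b) \<in> \<beta>" "(b, c) \<in> alt_comp \<gamma> \<beta> K" "(c, d) \<in> \<beta>" "odd K"
  shows "(eval3 I (j 1) a b d, d) \<in> alt_comp (\<alpha> \<inter> \<gamma>) (\<alpha> \<inter> \<beta>) (n * Suc K)"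
proof -
  have "a \<in> A" "b \<in> A" "d \<in> A"
    using congruence_carrier[OF cong_\<alpha> assms(1)] congruence_carrier[OF cong_\<beta> assms(2)] by auto
  define st where "st s = eval3 I (j s) a (if odd s then b else c) d" for s
  have step: "(st s, st (Suc s)) \<in> alt_comp (\<alpha> \<inter> \<gamma>) (\<alpha> \<inter> \<beta>) (Suc K)" if "s \<in> {1..n}" for s
  proof (cases "odd s")
    case True
    then show ?thesis
      using j_shift[OF that assms(1,5,3,4)] j_xzz_odd[OF \<open>a \<in> A\<close> \<open>d \<in> A\<close> that]
      by (simp add: st_def)
  next
    case False
    have "(c, b) \<in> alt_comp \<gamma> \<beta> K"
      using assms(3,5) converse_alt_comp_sym[OF congruence_sym[OF cong_\<gamma>] congruence_sym[OF cong_\<beta>], of K]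
      by auto
    moreover have "(b, a) \<in> \<beta>"
      using assms(2) congruence_sym[OF cong_\<beta>] by (blast dest: symD)
    ultimately show ?thesis
      using False j_shift[OF that assms(1,5)] j_xxz_even[OF \<open>a \<in> A\<close> \<open>d \<in> A\<close> that]
      by (simp add: st_def)
  qed
  have chain: "(st 1, st (Suc s)) \<in> alt_comp (\<alpha> \<inter> \<gamma>) (\<alpha> \<inter> \<beta>) (s * Suc K)" if "s \<le> n" for s
    using that
  proof (induction s)
    case 0
    then show ?case by simp
  next
    case (Suc s)
    have "even (s * Suc K)"
      using assms(5) by simp
    moreover have "(st 1, st (Suc s)) \<in> alt_comp (\<alpha> \<inter> \<gamma>) (\<alpha> \<inter> \<beta>) (s * Suc K)"
      using Suc by simp
    moreover have "(st (Suc s), st (Suc (Suc s))) \<in> alt_comp (\<alpha> \<inter> \<gamma>) (\<alpha> \<inter> \<beta>) (Suc K)"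
      using step Suc.prems by simp
    ultimately have "(st 1, st (Suc (Suc s))) \<in> alt_comp (\<alpha> \<inter> \<gamma>) (\<alpha> \<inter> \<beta>) (s * Suc K + Suc K)"
      using alt_comp_add_even by blast
    then show ?case
      by (simp only: mult_Suc add.commute)
  qed
  moreover have "st (Suc n) = d"
    using j_last[OF \<open>a \<in> A\<close> _ \<open>d \<in> A\<close>] \<open>b \<in> A\<close> congruence_carrier[OF cong_\<beta> assms(4)]
    by (simp add: st_def)
  ultimately show ?thesis
    using chain[of n] by (simp add: st_def mult.commute)
qed

lemma alt_comp_reduction:
  assumes "(a, d) \<in> \<alpha>" "(a, d) \<in> alt_comp \<beta> \<gamma> (2 * N + 1)" "N \<ge> 1" "even k"
    and "(a, eval3 I p a a d) \<in> (\<alpha> \<inter> (\<gamma> O \<beta>)) O alt_comp (\<alpha> \<inter> \<gamma>) (\<alpha> \<inter> \<beta>) k"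
  shows "(a, d) \<in> (\<alpha> \<inter> (\<gamma> O \<beta>)) O alt_comp (\<alpha> \<inter> \<gamma>) (\<alpha> \<inter> \<beta>) (k + 2 * N * n)"
proof -
  define K where "K = 2 * N - 1"
  have K: "odd K" "2 * N + 1 = Suc (Suc K)"
    using assms(3) by (simp_all add: K_def)
  have "alt_comp \<beta> \<gamma> (2 * N + 1) = \<beta> O alt_comp \<gamma> \<beta> K O \<beta>"
    using alt_comp_Suc_right[of \<gamma> \<beta> K] K by (simp add: O_assoc)
  then obtain b c where ab: "(a, b) \<in> \<beta>" and bc: "(b, c) \<in> alt_comp \<gamma> \<beta> K" and cd: "(c, d) \<in> \<beta>"
    using assms(2) by auto
  have "a \<in> A" "d \<in> A"
    using congruence_carrier[OF cong_\<alpha> assms(1)] by auto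
  have "(eval3 I p a a d, eval3 I (j 1) a b d) \<in> \<alpha> \<inter> \<beta>"
    using j_congruence_Int_\<alpha>[OF cong_\<beta> _ assms(1) ab] p_xxz[OF \<open>a \<in> A\<close> \<open>d \<in> A\<close>] by simp
  moreover have "(\<alpha> \<inter> (\<gamma> O \<beta>)) O alt_comp (\<alpha> \<inter> \<gamma>) (\<alpha> \<inter> \<beta>) k O (\<alpha> \<inter> \<beta>)
      \<subseteq> (\<alpha> \<inter> (\<gamma> O \<beta>)) O alt_comp (\<alpha> \<inter> \<gamma>) (\<alpha> \<inter> \<beta>) k"
  proof (rule alt_comp_absorb[OF assms(4)])
    show "trans (\<alpha> \<inter> \<beta>)"
      using congruence_trans[OF cong_\<alpha>] congruence_trans[OF cong_\<beta>] by (rule trans_Int)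
    show "(\<alpha> \<inter> (\<gamma> O \<beta>)) O (\<alpha> \<inter> \<beta>) \<subseteq> \<alpha> \<inter> (\<gamma> O \<beta>)"
      using congruence_trans[OF cong_\<alpha>] congruence_trans[OF cong_\<beta>] by (blast dest: transD)
  qed
  ultimately have "(a, eval3 I (j 1) a b d) \<in> (\<alpha> \<inter> (\<gamma> O \<beta>)) O alt_comp (\<alpha> \<inter> \<gamma>) (\<alpha> \<inter> \<beta>) k"
    using assms(5) by blast
  moreover have "(eval3 I (j 1) a b d, d) \<in> alt_comp (\<alpha> \<inter> \<gamma>) (\<alpha> \<inter> \<beta>) (2 * N * n)"
    using j_sweep[OF assms(1) ab bc cd K(1)] K(2) by (simp add: mult.commute)
  ultimately obtain z where "(a, z) \<in> \<alpha> \<inter> (\<gamma> O \<beta>)"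
    and "(z, d) \<in> alt_comp (\<alpha> \<inter> \<gamma>) (\<alpha> \<inter> \<beta>) k O alt_comp (\<alpha> \<inter> \<gamma>) (\<alpha> \<inter> \<beta>) (2 * N * n)"
    by blast
  then show ?thesis
    unfolding alt_comp_add_even[OF assms(4)] by blast
qed

lemma Int_alt_comp_pow2_subset:
  "\<alpha> \<inter> alt_comp \<beta> \<gamma> (2 ^ Suc r + 1)
     \<subseteq> (\<alpha> \<inter> (\<gamma> O \<beta>)) O alt_comp (\<alpha> \<inter> \<gamma>) (\<alpha> \<inter> \<beta>) ((2 ^ (Suc r + 1) - 2) * n)"
proof (induction r)
  case 0
  show ?case
  proof (rule subrelI)
    fix a d
    assume ad: "(a, d) \<in> \<alpha> \<inter> alt_comp \<beta> \<gamma> (2 ^ Suc 0 + 1)"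
    then have "a \<in> A"
      using congruence_carrier[OF cong_\<alpha>] by blast
    have "(a, eval3 I p a a d) \<in> \<gamma> O \<beta>"
      using p_fold[OF cong_\<beta> cong_\<gamma> \<open>a \<in> A\<close>, of d 1] ad by (simp add: numeral_2_eq_2)
    moreover have "(a, eval3 I p a a d) \<in> \<alpha>"
      using p_xxz_congruence[OF cong_\<alpha>] ad by blast
    ultimately have "(a, d) \<in> (\<alpha> \<inter> (\<gamma> O \<beta>)) O alt_comp (\<alpha> \<inter> \<gamma>) (\<alpha> \<inter> \<beta>) (0 + 2 * 1 * n)"
      using ad by (intro alt_comp_reduction) auto
    then show "(a, d) \<in> (\<alpha> \<inter> (\<gamma> O \<beta>)) O alt_comp (\<alpha> \<inter> \<gamma>) (\<alpha> \<inter> \<beta>) ((2 ^ (Suc 0 + 1) - 2) * n)"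
      by simp
  qed
next
  case (Suc r)
  define N :: nat where "N = 2 ^ Suc r"
  have N: "even N" "N \<ge> 1" "2 ^ Suc (Suc r) + 1 = 2 * N + 1"
    by (simp_all add: N_def)
  have k: "(2 ^ (Suc r + 1) - 2) * n + 2 * N * n = (2 ^ (Suc (Suc r) + 1) - 2) * n"
    by (simp add: N_def algebra_simps)
  show ?case
  proof (rule subrelI)
    fix a d
    assume ad: "(a, d) \<in> \<alpha> \<inter> alt_comp \<beta> \<gamma> (2 ^ Suc (Suc r) + 1)"
    then have "a \<in> A"
      using congruence_carrier[OF cong_\<alpha>] by blast
    have "(a, eval3 I p a a d) \<in> alt_comp \<beta> \<gamma> (2 ^ Suc r + 1)"
      using p_fold[OF cong_\<beta> cong_\<gamma> \<open>a \<in> A\<close>, of d N] ad N by (simp add: N_def)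
    moreover have "(a, eval3 I p a a d) \<in> \<alpha>"
      using p_xxz_congruence[OF cong_\<alpha>] ad by blast
    ultimately have "(a, eval3 I p a a d)
        \<in> (\<alpha> \<inter> (\<gamma> O \<beta>)) O alt_comp (\<alpha> \<inter> \<gamma>) (\<alpha> \<inter> \<beta>) ((2 ^ (Suc r + 1) - 2) * n)"
      using Suc.IH by blast
    moreover have "(a, d) \<in> alt_comp \<beta> \<gamma> (2 * N + 1)"
      using ad by (simp only: N(3) Int_iff)
    ultimately have "(a, d) \<in> (\<alpha> \<inter> (\<gamma> O \<beta>)) O alt_comp (\<alpha> \<inter> \<gamma>) (\<alpha> \<inter> \<beta>)
        ((2 ^ (Suc r + 1) - 2) * n + 2 * N * n)"
      using ad N(2) by (intro alt_comp_reduction) auto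
    then show "(a, d) \<in> (\<alpha> \<inter> (\<gamma> O \<beta>)) O alt_comp (\<alpha> \<inter> \<gamma>) (\<alpha> \<inter> \<beta>) ((2 ^ (Suc (Suc r) + 1) - 2) * n)"
      by (simp only: k)
  qed
qed

end

theorem theorem4p7:
  fixes ar :: "'f \<Rightarrow> nat" and A :: "'a set" and I :: "'f \<Rightarrow> 'a list \<Rightarrow> 'a"
    and n q :: nat and p :: "'f trm" and j :: "nat \<Rightarrow> 'f trm"
    and \<alpha> \<beta> \<gamma> :: "'a rel"
  assumes "algebra ar A I"
    and "gumm_terms ar A I n p j"
    and "q \<ge> 1"
    and "congruence ar A I \<alpha>" and "congruence ar A I \<beta>" and "congruence ar A I \<gamma>"
  shows "\<alpha> \<inter> alt_comp \<beta> \<gamma> (2^q + 1)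
           \<subseteq> (\<alpha> \<inter> (\<gamma> O \<beta>)) O alt_comp (\<alpha> \<inter> \<gamma>) (\<alpha> \<inter> \<beta>) ((2^(q+1) - 2) * n)
      \<and> \<alpha> \<inter> alt_comp \<beta> \<gamma> (2^q + 1)
           \<subseteq> alt_comp (\<alpha> \<inter> \<beta>) (\<alpha> \<inter> \<gamma>) ((2^(q+1) - 2) * n) O (\<alpha> \<inter> (\<beta> O \<gamma>))"
proof -
  interpret gumm_congruences ar A I n p j \<alpha> \<beta> \<gamma>
    using assms(2,4-6) by unfold_locales
  obtain r where q: "q = Suc r"
    using assms(3) by (cases q) auto
  let ?k = "(2^(q+1) - 2) * n"
  have sym: "sym \<alpha>" "sym \<beta>" "sym \<gamma>"
    using assms(4-6) by (simp_all add: congruence_sym)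
  have first: "\<alpha> \<inter> alt_comp \<beta> \<gamma> (2^q + 1) \<subseteq> (\<alpha> \<inter> (\<gamma> O \<beta>)) O alt_comp (\<alpha> \<inter> \<gamma>) (\<alpha> \<inter> \<beta>) ?k"
    using Int_alt_comp_pow2_subset[of r] q by simp
  have "(\<alpha> \<inter> alt_comp \<beta> \<gamma> (2^q + 1))\<inverse> = \<alpha> \<inter> alt_comp \<beta> \<gamma> (2^q + 1)"
    using converse_alt_comp_sym[OF sym(2,3), of "2^q + 1"] q sym(1)
    by (simp add: converse_Int sym_conv_converse_eq del: alt_comp.simps)
  moreover have "((\<alpha> \<inter> (\<gamma> O \<beta>)) O alt_comp (\<alpha> \<inter> \<gamma>) (\<alpha> \<inter> \<beta>) ?k)\<inverse>
      = alt_comp (\<alpha> \<inter> \<beta>) (\<alpha> \<inter> \<gamma>) ?k O (\<alpha> \<inter> (\<beta> O \<gamma>))"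
    using converse_alt_comp_sym[OF sym_Int[OF sym(1,3)] sym_Int[OF sym(1,2)], of ?k] sym
    by (simp add: converse_relcomp converse_Int sym_conv_converse_eq)
  ultimately show ?thesis
    using first converse_mono[THEN iffD2, OF first] by simp
qed

end
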